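(* Let $q$ be an odd prime power, $n=2^v$ with $v\ge1$, and $s$ an odd integer. There exists $t\in\mathbb{Z}_{2^v}$ with $qt\equiv t\pmod{2^v}$ such that Type-I duadic splittings of $\mathbb{Z}_{2^v}$ given by $\rho_{s,t}$ exist if and only if $\nu_2(q^j-s)+\nu_2(q-1)>v$ for all integers $j\ge0$.
   Context: $\mu_q:\mathbb{Z}_n\to\mathbb{Z}_n$, $i\mapsto qi\bmod n$; $P$ is $\mu_q$-invariant if $\mu_q(P)=P$. $\rho_{s,t}:\mathbb{Z}_n\to\mathbb{Z}_n$, $i\mapsto s(i+t)\bmod n$. Type-I duadic splittings of $\mathbb{Z}_n$ given by $\rho_{s,t}$ exist if there is a $\mu_q$-invariant $P$ with $\mathbb{Z}_n=P\cup\rho_{s,t}(P)$ a disjoint union. $\nu_2$ is the $2$-adic valuation, $\nu_2(0)=\infty$. *)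

theory Defs
  imports "HOL-Computational_Algebra.Computational_Algebra" "HOL-Library.Extended_Nat"
begin

text \<open>Elements of Z_n are represented by the integers 0..n-1.\<close>

definition mu :: "int \<Rightarrow> int \<Rightarrow> int \<Rightarrow> int" where
  "mu n q i = (q * i) mod n"

definition rho :: "int \<Rightarrow> int \<Rightarrow> int \<Rightarrow> int \<Rightarrow> int" where
  "rho n s t i = (s * (i + t)) mod n"

definition typeI_duadic_exists :: "int \<Rightarrow> int \<Rightarrow> int \<Rightarrow> int \<Rightarrow> bool" where
  "typeI_duadic_exists n q s t \<longleftrightarrow>
     (\<exists>P. P \<subseteq> {0..<n} \<and> mu n q ` P = P \<and>
          P \<inter> rho n s t ` P = {} \<and> P \<union> rho n s t ` P = {0..<n})"

definition nu2 :: "int \<Rightarrow> enat" where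
  "nu2 x = (if x = 0 then \<infinity> else enat (multiplicity (2::int) x))"

end

theory Submission
  imports Defs "HOL-Number_Theory.Cong"
begin

text \<open>
  Put \<open>a = \<nu>\<^sub>2(q - 1)\<close> and \<open>m = v - a\<close>. The condition on \<open>\<nu>\<^sub>2\<close> says exactly that
  \<open>s \<equiv> q \<equiv> 1 (mod 2^(m+1))\<close>, and \<open>\<mu>\<^sub>q\<close> fixes \<open>t\<close> iff \<open>2^m\<close> divides \<open>t\<close>.
  If \<open>P\<close> and \<open>\<rho>(P)\<close> split \<open>\<int>/2^v\<close> with \<open>P\<close> invariant under \<open>\<mu>\<^sub>q\<close>, then neither
  \<open>\<rho>\<close> nor \<open>\<mu>\<^sub>q \<circ> \<rho>\<close> has a fixed point; solving the linear congruences for such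
  fixed points forces \<open>2^(m+1)\<close> to divide \<open>s - 1\<close> and \<open>qs - 1\<close>. Conversely, under these
  congruences \<open>\<mu>\<^sub>q\<close> preserves residues mod \<open>2^(m+1)\<close> while \<open>\<rho>\<close> with \<open>t = 2^m\<close>
  shifts them by \<open>2^m\<close>, so the elements whose residue mod \<open>2^(m+1)\<close> is below \<open>2^m\<close>
  form a splitting set.
\<close>

lemma nu2_add_gt_iff_dvd:
  fixes x y :: int
  assumes "y \<noteq> 0"
  shows "nu2 x + nu2 y > enat v \<longleftrightarrow> 2 ^ (v + 1 - multiplicity 2 y) dvd x"
proof (cases "x = 0")
  case True
  then show ?thesis using assms by (simp add: nu2_def)
next
  case False
  define a where "a = multiplicity (2::int) y"
  have "nu2 x + nu2 y > enat v \<longleftrightarrow> v + 1 - a \<le> multiplicity 2 x"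
    using False assms by (auto simp: nu2_def a_def)
  also have "\<dots> \<longleftrightarrow> 2 ^ (v + 1 - a) dvd x"
  proof
    assume "v + 1 - a \<le> multiplicity 2 x" then show "2 ^ (v + 1 - a) dvd x"
      by (rule multiplicity_dvd')
  next
    assume "2 ^ (v + 1 - a) dvd x" then show "v + 1 - a \<le> multiplicity 2 x"
      using False by (intro multiplicity_geI) auto
  qed
  finally show ?thesis by (simp add: a_def)
qed

lemma dvd_pow_diff_all_iff:
  fixes d q s :: int
  shows "(\<forall>j::nat. d dvd q ^ j - s) \<longleftrightarrow> d dvd s - 1 \<and> d dvd q - 1"
proof
  assume H: "\<forall>j::nat. d dvd q ^ j - s"
  have "d dvd 1 - s" "d dvd q - s" using H[rule_format, of 0] H[rule_format, of 1] by simp_all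
  moreover have "q - 1 = (q - s) - (1 - s)" by simp
  ultimately show "d dvd s - 1 \<and> d dvd q - 1"
    by (metis dvd_diff dvd_diff_commute)
next
  assume "d dvd s - 1 \<and> d dvd q - 1"
  then have "[s = 1] (mod d)" "[q = 1] (mod d)" by (simp_all add: cong_iff_dvd_diff)
  then have "[q ^ j = s] (mod d)" for j :: nat
    by (metis cong_pow cong_sym cong_trans power_one)
  then show "\<forall>j::nat. d dvd q ^ j - s" by (simp add: cong_iff_dvd_diff)
qed

lemma mult_mod_two_power_eq_iff:
  fixes q t :: int
  assumes "q \<noteq> 1"
  shows "(q * t) mod 2 ^ v = t mod 2 ^ v \<longleftrightarrow> 2 ^ (v - multiplicity 2 (q - 1)) dvd t"
proof -
  define a where "a = multiplicity (2::int) (q - 1)"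
  obtain u where u: "q - 1 = 2 ^ a * u" "odd u"
    using multiplicity_decompose'[of "q - 1" 2] assms unfolding a_def by auto
  have "q * t - t = 2 ^ a * (u * t)" using u(1) by (simp add: algebra_simps flip: u(1))
  then have "(q * t) mod 2 ^ v = t mod 2 ^ v \<longleftrightarrow> 2 ^ v dvd 2 ^ a * (u * t)"
    by (simp add: mod_eq_dvd_iff)
  also have "\<dots> \<longleftrightarrow> 2 ^ (v - a) dvd t"
  proof (cases "a \<le> v")
    case True
    then have "(2::int) ^ v = 2 ^ a * 2 ^ (v - a)" by (simp flip: power_add)
    then have "2 ^ v dvd 2 ^ a * (u * t) \<longleftrightarrow> 2 ^ (v - a) dvd u * t" by simp
    also have "\<dots> \<longleftrightarrow> 2 ^ (v - a) dvd t"
      using u(2) by (simp add: coprime_dvd_mult_right_iff)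
    finally show ?thesis .
  next
    case False
    then have "(2::int) ^ v dvd 2 ^ a" by (simp add: le_imp_power_dvd)
    with False show ?thesis by simp
  qed
  finally show ?thesis by (simp add: a_def)
qed

lemma bij_betw_affine_mod:
  fixes c d n :: int
  assumes "coprime c n" "n > 0"
  shows "bij_betw (\<lambda>i. (c * i + d) mod n) {0..<n} {0..<n}"
proof -
  have inj: "inj_on (\<lambda>i. (c * i + d) mod n) {0..<n}"
  proof
    fix x y assume xy: "x \<in> {0..<n}" "y \<in> {0..<n}" "(c * x + d) mod n = (c * y + d) mod n"
    then have "[c * x = c * y] (mod n)" by (metis cong_add_rcancel cong_def)
    then have "[x = y] (mod n)" using assms(1) by (metis cong_mult_lcancel)
    then show "x = y" using xy by (simp add: cong_def)
  qed
  moreover have "(\<lambda>i. (c * i + d) mod n) ` {0..<n} = {0..<n}"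
    by (rule endo_inj_surj) (use inj assms(2) in auto)
  ultimately show ?thesis by (simp add: bij_betw_def)
qed

text \<open>Factor \<open>d = 2^r u\<close> with \<open>u\<close> odd; then \<open>r \<le> k\<close>, so \<open>2^r\<close> divides \<open>e\<close> and \<open>u\<close> is invertible mod \<open>2^v\<close>.\<close>
lemma two_power_linear_congruence_solvable:
  fixes d e :: int
  assumes "\<not> 2 ^ (k + 1) dvd d" "2 ^ k dvd e"
  shows "\<exists>x. (2::int) ^ v dvd d * x + e"
proof -
  have "d \<noteq> 0" using assms(1) by auto
  define r where "r = multiplicity (2::int) d"
  obtain u where u: "d = 2 ^ r * u" "\<not> 2 dvd u"
    using multiplicity_decompose'[OF \<open>d \<noteq> 0\<close>, of 2] unfolding r_def by auto
  have "r \<le> k"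
    using assms(1) multiplicity_dvd'[of "k + 1" 2 d] unfolding r_def by linarith
  then have "2 ^ r dvd e" using assms(2) by (meson dvd_trans le_imp_power_dvd)
  then obtain e' where e': "e = 2 ^ r * e'" by blast
  have "coprime u ((2::int) ^ v)" using u(2) by simp
  then obtain y where y: "[u * y = 1] (mod 2 ^ v)" by (metis cong_solve_coprime_int)
  have "[u * (- e' * y) + e' = - e' * (u * y) + e'] (mod 2 ^ v)" by (simp add: algebra_simps)
  also have "[- e' * (u * y) + e' = - e' * 1 + e'] (mod 2 ^ v)"
    by (intro cong_add cong_mult cong_refl y)
  finally have "2 ^ v dvd u * (- e' * y) + e'" by (simp add: cong_0_iff)
  then have "2 ^ v dvd 2 ^ r * (u * (- e' * y) + e')" by simp
  then show ?thesis using u e' by (metis distrib_left mult.assoc)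
qed

lemma mod_affine_fixed_point:
  fixes c n t x :: int
  assumes "n dvd (c - 1) * x + c * t"
  shows "(c * (x mod n + t)) mod n = x mod n"
proof -
  have "(c * (x mod n + t)) mod n = (c * (x + t)) mod n"
    by (metis mod_add_left_eq mod_mult_right_eq)
  also have "\<dots> = x mod n" using assms by (simp add: mod_eq_dvd_iff algebra_simps)
  finally show ?thesis .
qed

text \<open>A point of \<open>P\<close> cannot be fixed since \<open>r\<close> moves it out of \<open>P\<close> and \<open>g\<close> permutes \<open>P\<close>;
  a fixed point \<open>r z\<close> with \<open>z \<in> P\<close> would, by commutativity and injectivity of \<open>r\<close>, make \<open>z\<close> fixed.\<close>
lemma splitting_no_fixed_point:
  assumes split: "P \<subseteq> A" "P \<inter> r ` P = {}" "P \<union> r ` P = A"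
    and inj: "inj_on r A" "inj_on g A"
    and g: "g ` P = P" "g ` A \<subseteq> A" "\<And>y. y \<in> A \<Longrightarrow> g (r y) = r (g y)"
    and "x \<in> A"
  shows "g (r x) \<noteq> x"
proof -
  have no_fix_in_P: "g (r y) \<noteq> y" if "y \<in> P" for y
  proof
    assume fixed: "g (r y) = y"
    obtain p where p: "p \<in> P" "y = g p" using g(1) \<open>y \<in> P\<close> by blast
    have "r y \<in> A" "r y \<notin> P" using split that by auto
    moreover have "r y = p"
      using inj_onD[OF inj(2), of "r y" p] fixed p \<open>r y \<in> A\<close> split(1) by auto
    ultimately show False using p(1) by simp
  qed
  show ?thesis
  proof (cases "x \<in> P")
    case False
    then obtain z where z: "z \<in> P" "x = r z" using split(3) \<open>x \<in> A\<close> by auto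
    then have "z \<in> A" "r z \<in> A" using split by auto
    then have "g (r z) \<in> A" using g(2) by blast
    show ?thesis
    proof
      assume "g (r x) = x"
      then have "r (g (r z)) = r z" using z g(3)[OF \<open>r z \<in> A\<close>] by simp
      then have "g (r z) = z" using inj_onD[OF inj(1)] \<open>z \<in> A\<close> \<open>g (r z) \<in> A\<close> by blast
      with no_fix_in_P z(1) show False by blast
    qed
  qed (use no_fix_in_P in blast)
qed

lemma mu_rho_eq: "mu n q (rho n s t y) = (q * s * (y + t)) mod n"
  by (simp add: mu_def rho_def mod_mult_right_eq mult.assoc)

lemma typeI_duadic_no_fixed_point:
  fixes n q s t :: int
  assumes "typeI_duadic_exists n q s t" "n > 0" "coprime q n" "coprime s n"
    and "n dvd (q - 1) * t" "x \<in> {0..<n}"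
  shows "rho n s t x \<noteq> x" "mu n q (rho n s t x) \<noteq> x"
proof -
  obtain P where P: "P \<subseteq> {0..<n}" "mu n q ` P = P"
      "P \<inter> rho n s t ` P = {}" "P \<union> rho n s t ` P = {0..<n}"
    using assms(1) unfolding typeI_duadic_exists_def by (elim exE conjE) (rule that)
  have "rho n s t = (\<lambda>i. (s * i + s * t) mod n)" by (auto simp: rho_def algebra_simps)
  then have inj_rho: "inj_on (rho n s t) {0..<n}"
    using bij_betw_affine_mod[OF assms(4,2)] by (simp only: bij_betw_def)
  have "mu n q = (\<lambda>i. (q * i + 0) mod n)" by (auto simp: mu_def)
  then have inj_mu: "inj_on (mu n q) {0..<n}"
    using bij_betw_affine_mod[OF assms(3,2)] by (simp only: bij_betw_def)
  have mu_range: "mu n q ` {0..<n} \<subseteq> {0..<n}" using assms(2) by (auto simp: mu_def)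
  have commute: "mu n q (rho n s t y) = rho n s t (mu n q y)" for y
  proof -
    have "n dvd s * ((q - 1) * t)" using assms(5) by simp
    then have "(q * s * (y + t)) mod n = (s * (q * y + t)) mod n"
      by (simp add: mod_eq_dvd_iff algebra_simps)
    also have "\<dots> = rho n s t (mu n q y)"
      unfolding rho_def mu_def by (metis mod_add_left_eq mod_mult_right_eq)
    finally show ?thesis unfolding mu_rho_eq .
  qed
  show "rho n s t x \<noteq> x"
    using splitting_no_fixed_point[OF P(1,3,4) inj_rho, of id] assms(6) by simp
  show "mu n q (rho n s t x) \<noteq> x"
    by (rule splitting_no_fixed_point[OF P(1,3,4) inj_rho inj_mu P(2) mu_range commute assms(6)])
qed

lemma typeI_duadic_imp_congruences:
  fixes q s t :: int
  assumes "typeI_duadic_exists (2 ^ v) q s t" "odd q" "odd s"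
    and "(q * t) mod 2 ^ v = t mod 2 ^ v" "2 ^ k dvd t"
  shows "2 ^ (k + 1) dvd s - 1 \<and> 2 ^ (k + 1) dvd q - 1"
proof -
  define n :: int where "n = 2 ^ v"
  have "n dvd (q - 1) * t" using assms(4) by (simp add: n_def mod_eq_dvd_iff left_diff_distrib)
  moreover have "n > 0" "coprime q n" "coprime s n" using assms(2,3) by (simp_all add: n_def)
  ultimately have no_fix: "rho n s t x \<noteq> x" "mu n q (rho n s t x) \<noteq> x" if "x \<in> {0..<n}" for x
    using typeI_duadic_no_fixed_point[OF assms(1)[folded n_def]] that by blast+
  have s1: "2 ^ (k + 1) dvd s - 1"
  proof (rule ccontr)
    assume "\<not> 2 ^ (k + 1) dvd s - 1"
    then obtain x where "n dvd (s - 1) * x + s * t"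
      using two_power_linear_congruence_solvable dvd_mult[OF assms(5)] unfolding n_def by blast
    then have "rho n s t (x mod n) = x mod n" unfolding rho_def by (rule mod_affine_fixed_point)
    then show False using no_fix(1) \<open>n > 0\<close> by simp
  qed
  have qs1: "2 ^ (k + 1) dvd q * s - 1"
  proof (rule ccontr)
    assume "\<not> 2 ^ (k + 1) dvd q * s - 1"
    then obtain x where "n dvd (q * s - 1) * x + q * s * t"
      using two_power_linear_congruence_solvable dvd_mult[OF assms(5), of "q * s"]
      unfolding n_def by blast
    then have "mu n q (rho n s t (x mod n)) = x mod n"
      unfolding mu_rho_eq by (rule mod_affine_fixed_point)
    then show False using no_fix(2) \<open>n > 0\<close> by simp
  qed
  have "2 ^ (k + 1) dvd (q * s - 1) - q * (s - 1)" by (rule dvd_diff[OF qs1 dvd_mult[OF s1]])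
  moreover have "(q * s - 1) - q * (s - 1) = q - 1" by (simp add: algebra_simps)
  ultimately show ?thesis using s1 by simp
qed

lemma mod_add_half_lt_iff:
  fixes x :: int
  shows "(x + 2 ^ m) mod 2 ^ (m + 1) < 2 ^ m \<longleftrightarrow> \<not> x mod 2 ^ (m + 1) < 2 ^ m"
proof -
  define M :: int where "M = 2 ^ (m + 1)"
  define r where "r = x mod M"
  have M: "M = 2 * 2 ^ m" and r: "0 \<le> r" "r < M" by (simp_all add: M_def r_def)
  have "(x + 2 ^ m) mod M = (r + 2 ^ m) mod M" by (simp add: r_def mod_add_left_eq)
  also have "\<dots> = (if r < 2 ^ m then r + 2 ^ m else r - 2 ^ m)"
  proof (cases "r < 2 ^ m")
    case False
    have "(r + 2 ^ m) mod M = (r - 2 ^ m + 1 * M) mod M" using M by (simp add: add.commute)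
    also have "\<dots> = (r - 2 ^ m) mod M" by simp
    also have "\<dots> = r - 2 ^ m" using False r M by (intro mod_pos_pos_trivial) auto
    finally show ?thesis using False by simp
  qed (use r M in simp)
  finally show ?thesis using r M unfolding M_def[symmetric] r_def[symmetric] by auto
qed

lemma partition_by_swapping_map:
  assumes "r ` A = A" "P \<subseteq> A" "\<And>x. x \<in> A \<Longrightarrow> r x \<in> P \<longleftrightarrow> x \<notin> P"
  shows "P \<inter> r ` P = {}" "P \<union> r ` P = A"
proof -
  show "P \<inter> r ` P = {}" using assms(2,3) by blast
  have "r ` P \<subseteq> A" using assms(1,2) by blast
  moreover have "x \<in> P \<union> r ` P" if "x \<in> A" for x
  proof -
    obtain y where "y \<in> A" "x = r y" using assms(1) \<open>x \<in> A\<close> by blast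
    then show ?thesis using assms(3)[of y] by (cases "y \<in> P") auto
  qed
  ultimately show "P \<union> r ` P = A" using assms(2) by blast
qed

lemma typeI_duadic_exists_of_congruences:
  fixes q s :: int
  assumes "m < v" "2 ^ (m + 1) dvd s - 1" "2 ^ (m + 1) dvd q - 1"
  shows "typeI_duadic_exists (2 ^ v) q s (2 ^ m)"
proof -
  define n :: int where "n = 2 ^ v"
  define M :: int where "M = 2 ^ (m + 1)"
  define P where "P = {x \<in> {0..<n}. x mod M < 2 ^ m}"
  have "n > 0" by (simp add: n_def)
  have P_sub: "P \<subseteq> {0..<n}" by (auto simp: P_def)
  have "M dvd n" unfolding M_def n_def using assms(1) by (intro le_imp_power_dvd) simp
  then have mod_M: "(y mod n) mod M = y mod M" for y by (simp add: mod_mod_cancel)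
  have "[s = 1] (mod M)" "[q = 1] (mod M)"
    using assms(2,3) by (simp_all add: M_def cong_iff_dvd_diff)
  then have mu_mod_M: "mu n q x mod M = x mod M"
    and rho_mod_M: "rho n s (2 ^ m) x mod M = (x + 2 ^ m) mod M" for x
    using cong_scalar_right[of _ 1 M x] cong_scalar_right[of _ 1 M "x + 2 ^ m"]
    by (simp_all add: mu_def rho_def mod_M cong_def)
  have "(2::int) dvd 2 ^ (m + 1)" by simp
  then have "2 dvd s - 1" "2 dvd q - 1" using assms(2,3) by (blast intro: dvd_trans)+
  then have "coprime q n" "coprime s n" by (simp_all add: n_def)
  have "mu n q = (\<lambda>i. (q * i + 0) mod n)" by (auto simp: mu_def)
  then have "inj_on (mu n q) {0..<n}"
    using bij_betw_affine_mod[OF \<open>coprime q n\<close> \<open>n > 0\<close>] by (simp only: bij_betw_def)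
  then have "inj_on (mu n q) P" using P_sub by (rule inj_on_subset)
  moreover have "finite P" using P_sub finite_atLeastLessThan_int by (rule finite_subset)
  moreover have "mu n q x \<in> P" if "x \<in> P" for x
    using that mu_mod_M[of x] \<open>n > 0\<close> by (simp add: P_def mu_def)
  ultimately have mu_P: "mu n q ` P = P" by (metis endo_inj_surj image_subsetI)
  have "rho n s (2 ^ m) = (\<lambda>i. (s * i + s * 2 ^ m) mod n)" by (auto simp: rho_def algebra_simps)
  then have rho_onto: "rho n s (2 ^ m) ` {0..<n} = {0..<n}"
    using bij_betw_affine_mod[OF \<open>coprime s n\<close> \<open>n > 0\<close>] by (simp only: bij_betw_def)
  have "rho n s (2 ^ m) x \<in> P \<longleftrightarrow> x \<notin> P" if "x \<in> {0..<n}" for x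
    using that rho_onto mod_add_half_lt_iff[of x m] rho_mod_M[of x]
    unfolding P_def M_def by auto
  note split = partition_by_swapping_map[OF rho_onto P_sub this]
  show ?thesis
    unfolding typeI_duadic_exists_def n_def[symmetric] using P_sub mu_P split by blast
qed

lemma nu2_condition_iff_congruences:
  fixes q s :: int and v :: nat
  assumes "q \<noteq> 1" "odd q" "odd s"
  defines "m \<equiv> v - multiplicity 2 (q - 1)"
  shows "(\<forall>j::nat. nu2 (q ^ j - s) + nu2 (q - 1) > enat v)
    \<longleftrightarrow> 2 ^ (m + 1) dvd s - 1 \<and> 2 ^ (m + 1) dvd q - 1"
proof -
  define a where "a = multiplicity (2::int) (q - 1)"
  have "(\<forall>j::nat. nu2 (q ^ j - s) + nu2 (q - 1) > enat v)
      \<longleftrightarrow> (\<forall>j::nat. 2 ^ (v + 1 - a) dvd q ^ j - s)"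
    unfolding a_def using nu2_add_gt_iff_dvd[of "q - 1"] assms(1) by simp
  also have "\<dots> \<longleftrightarrow> 2 ^ (v + 1 - a) dvd s - 1 \<and> 2 ^ (v + 1 - a) dvd q - 1"
    by (rule dvd_pow_diff_all_iff)
  also have "\<dots> \<longleftrightarrow> 2 ^ (m + 1) dvd s - 1 \<and> 2 ^ (m + 1) dvd q - 1"
  proof (cases "a \<le> v")
    case True
    then have "v + 1 - a = m + 1" by (simp add: m_def a_def)
    then show ?thesis by simp
  next
    case False
    then have "v + 1 - a = 0" "m = 0" by (simp_all add: m_def a_def)
    moreover have "2 dvd s - 1" "2 dvd q - 1" using assms(2,3) by simp_all
    ultimately show ?thesis by simp
  qed
  finally show ?thesis .
qed

theorem lemma3p6:
  fixes q s :: int and v :: nat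
  assumes "\<exists>p k. prime p \<and> k \<ge> 1 \<and> q = p ^ k"
    and "odd q"
    and "v \<ge> 1"
    and "odd s"
  shows "(\<exists>t \<in> {0..<2^v}. (q * t) mod 2^v = t mod 2^v \<and> typeI_duadic_exists (2^v) q s t)
     \<longleftrightarrow> (\<forall>j::nat. nu2 (q ^ j - s) + nu2 (q - 1) > enat v)"
proof -
  have "q \<noteq> 1" using assms(1) prime_gt_1_int one_less_power by fastforce
  define m where "m = v - multiplicity 2 (q - 1)"
  have "multiplicity 2 (q - 1) \<ge> 1" using assms(2) \<open>q \<noteq> 1\<close> by (intro multiplicity_geI) auto
  then have "m < v" using assms(3) by (simp add: m_def)
  note fixed_iff = mult_mod_two_power_eq_iff[OF \<open>q \<noteq> 1\<close>, where v = v, folded m_def]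
  show ?thesis
    unfolding nu2_condition_iff_congruences[OF \<open>q \<noteq> 1\<close> assms(2,4), where v = v, folded m_def]
  proof
    assume "\<exists>t \<in> {0..<2^v}. (q * t) mod 2^v = t mod 2^v \<and> typeI_duadic_exists (2^v) q s t"
    then obtain t where t: "(q * t) mod 2^v = t mod 2^v" "typeI_duadic_exists (2^v) q s t"
      by blast
    then show "2 ^ (m + 1) dvd s - 1 \<and> 2 ^ (m + 1) dvd q - 1"
      using typeI_duadic_imp_congruences[OF t(2) assms(2,4) t(1)] fixed_iff by blast
  next
    assume "2 ^ (m + 1) dvd s - 1 \<and> 2 ^ (m + 1) dvd q - 1"
    then have "typeI_duadic_exists (2 ^ v) q s (2 ^ m)"
      using typeI_duadic_exists_of_congruences[OF \<open>m < v\<close>] by (elim conjE)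
    moreover have "(q * 2 ^ m) mod 2 ^ v = 2 ^ m mod 2 ^ v" using fixed_iff by simp
    moreover have "(2::int) ^ m \<in> {0..<2 ^ v}" using \<open>m < v\<close> by simp
    ultimately show "\<exists>t \<in> {0..<2^v}. (q * t) mod 2^v = t mod 2^v \<and> typeI_duadic_exists (2^v) q s t"
      by blast
  qed
qed

end
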